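(* Let $f\in\mathcal{M}_S$ and let $D$ be an invariant rotation domain of $f$ (i.e. $f(D)\subseteq D$). If $f$ is univalent in a neighbourhood of $D$, then there is no repelling fixed point of $f$ on the boundary of $D$.
   Context: A general transcendental meromorphic function is a meromorphic function $f:\mathbb{C}\to\widehat{\mathbb{C}}$ whose only essential singularity is at $\infty$ and which has either at least two poles or exactly one pole that is not an omitted value. An omitted value is $b\in\mathbb{C}$ with $f(z)\neq b$ for all $z$. A Baker omitted value (bov) is an omitted value $b$ for which there is a disk $D'$ centred at $b$ such that each component of the boundary of $f^{-1}(D')$ is bounded; it is stable if all iterates $f^n$ are defined (analytic) in a neighbourhood of $b$. $\mathcal{M}_S$ denotes the class of general transcendental meromorphic functions having a stable bov. An invariant Fatou component $D$ is a rotation domain if there is a conformal map $\phi$ from $D$ onto an annulus $\{1<|z|<r\}$ or onto the unit disk with $\phi\circ f\circ\phi^{-1}(z)=e^{2\pi i\theta}z$ for some irrational $\theta$. A fixed point $z_0$ is repelling if $|f'(z_0)|>1$. *)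

theory Defs
  imports "HOL-Complex_Analysis.Complex_Analysis"
begin

text \<open>A meromorphic function on the plane is represented by a function
  complex => complex that is (nicely) meromorphic on UNIV; its value at a pole
  is a normalised junk value (0) and is never used below.\<close>

definition poles :: "(complex \<Rightarrow> complex) \<Rightarrow> complex set" where
  "poles f = {z. is_pole f z}"

definition omitted_value :: "(complex \<Rightarrow> complex) \<Rightarrow> complex \<Rightarrow> bool" where
  "omitted_value f b \<longleftrightarrow> (\<forall>z. z \<notin> poles f \<longrightarrow> f z \<noteq> b)"

definition ess_sing_at_infinity :: "(complex \<Rightarrow> complex) \<Rightarrow> bool" where
  "ess_sing_at_infinity f \<longleftrightarrow>
     \<not> (\<exists>c. (f \<longlongrightarrow> c) at_infinity) \<and> \<not> filterlim f at_infinity at_infinity"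

definition general_transcendental_meromorphic :: "(complex \<Rightarrow> complex) \<Rightarrow> bool" where
  "general_transcendental_meromorphic f \<longleftrightarrow>
     f nicely_meromorphic_on UNIV \<and> ess_sing_at_infinity f \<and>
     ((\<exists>p q. p \<in> poles f \<and> q \<in> poles f \<and> p \<noteq> q) \<or>
      (\<exists>p. poles f = {p} \<and> \<not> omitted_value f p))"

definition preimage_mero :: "(complex \<Rightarrow> complex) \<Rightarrow> complex set \<Rightarrow> complex set" where
  "preimage_mero f S = {z. z \<notin> poles f \<and> f z \<in> S}"

definition baker_omitted_value :: "(complex \<Rightarrow> complex) \<Rightarrow> complex \<Rightarrow> bool" where
  "baker_omitted_value f b \<longleftrightarrow> omitted_value f b \<and>
     (\<exists>r>0. \<forall>x \<in> frontier (preimage_mero f (ball b r)).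
              bounded (connected_component_set (frontier (preimage_mero f (ball b r))) x))"

definition iterate_defined_on :: "(complex \<Rightarrow> complex) \<Rightarrow> nat \<Rightarrow> complex set \<Rightarrow> bool" where
  "iterate_defined_on f n U \<longleftrightarrow> (\<forall>k<n. \<forall>z\<in>U. (f ^^ k) z \<notin> poles f)"

definition stable_bov :: "(complex \<Rightarrow> complex) \<Rightarrow> complex \<Rightarrow> bool" where
  "stable_bov f b \<longleftrightarrow> baker_omitted_value f b \<and>
     (\<forall>n. \<exists>U. open U \<and> b \<in> U \<and> iterate_defined_on f n U)"

definition class_MS :: "(complex \<Rightarrow> complex) \<Rightarrow> bool" where
  "class_MS f \<longleftrightarrow> general_transcendental_meromorphic f \<and> (\<exists>b. stable_bov f b)"

text \<open>Chordal (spherical) metric restricted to finite points.\<close>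
definition chordal :: "complex \<Rightarrow> complex \<Rightarrow> real" where
  "chordal a b = 2 * norm (a - b) / (sqrt (1 + (norm a)\<^sup>2) * sqrt (1 + (norm b)\<^sup>2))"

text \<open>Normality of the family of iterates on U (in the spherical metric):
  every sequence of iterates has a subsequence that is uniformly Cauchy in the
  chordal metric on each compact subset of U (equivalently, by completeness
  of the Riemann sphere, converges locally uniformly in the chordal metric).\<close>
definition iterates_normal_on :: "(complex \<Rightarrow> complex) \<Rightarrow> complex set \<Rightarrow> bool" where
  "iterates_normal_on f U \<longleftrightarrow>
     (\<forall>m::nat \<Rightarrow> nat. \<exists>r::nat \<Rightarrow> nat. strict_mono r \<and>
        (\<forall>K. compact K \<and> K \<subseteq> U \<longrightarrow>
           (\<forall>e>0. \<exists>N. \<forall>i\<ge>N. \<forall>j\<ge>N. \<forall>z\<in>K.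
              chordal ((f ^^ m (r i)) z) ((f ^^ m (r j)) z) < e)))"

definition fatou_set :: "(complex \<Rightarrow> complex) \<Rightarrow> complex set" where
  "fatou_set f = {z. \<exists>U. open U \<and> z \<in> U \<and> (\<forall>n. iterate_defined_on f n U) \<and>
                          iterates_normal_on f U}"

definition fatou_component :: "(complex \<Rightarrow> complex) \<Rightarrow> complex set \<Rightarrow> bool" where
  "fatou_component f D \<longleftrightarrow> (\<exists>z \<in> fatou_set f. D = connected_component_set (fatou_set f) z)"

definition invariant_rotation_domain :: "(complex \<Rightarrow> complex) \<Rightarrow> complex set \<Rightarrow> bool" where
  "invariant_rotation_domain f D \<longleftrightarrow> fatou_component f D \<and> f ` D \<subseteq> D \<and>
     (\<exists>\<phi> (\<theta>::real). \<phi> holomorphic_on D \<and> inj_on \<phi> D \<and>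
        ((\<exists>r>1. \<phi> ` D = {w. 1 < norm w \<and> norm w < r}) \<or> \<phi> ` D = ball 0 1) \<and>
        \<theta> \<notin> \<rat> \<and>
        (\<forall>z\<in>D. \<phi> (f z) = exp (2 * pi * \<i> * complex_of_real \<theta>) * \<phi> z))"

text \<open>Univalence of a meromorphic f on U: injective as a map into the Riemann
  sphere, i.e. injective off the poles and at most one pole in U.\<close>
definition univalent_on :: "(complex \<Rightarrow> complex) \<Rightarrow> complex set \<Rightarrow> bool" where
  "univalent_on f U \<longleftrightarrow> inj_on f (U - poles f) \<and>
     (\<forall>p\<in>U \<inter> poles f. \<forall>q\<in>U \<inter> poles f. p = q)"

definition repelling_fixed_point :: "(complex \<Rightarrow> complex) \<Rightarrow> complex \<Rightarrow> bool" where
  "repelling_fixed_point f z0 \<longleftrightarrow> z0 \<notin> poles f \<and> f z0 = z0 \<and> norm (deriv f z0) > 1"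

end

theory Submission
  imports Defs
begin

text \<open>Through every point of a rotation domain passes a compact curve, the preimage of a
  circle under the linearising map, on which f acts as a rotation; so every point of the
  curve has an f-preimage on the curve. If z0 were a repelling fixed point on the boundary,
  such curves would come arbitrarily close to z0. Take the point u of such a curve nearest
  to z0. Near z0, f is locally surjective and expanding, so u = f x with x closer to z0
  than u; by univalence x is the preimage of u on the curve, contradicting the minimality
  of u.\<close>

lemma fatou_set_open: "open (fatou_set f)"
  unfolding fatou_set_def by (subst open_subopen) blast

lemma fatou_set_disjoint_poles: "z \<in> fatou_set f \<Longrightarrow> z \<notin> poles f"
proof -
  assume "z \<in> fatou_set f"
  then obtain U where "z \<in> U" "iterate_defined_on f 1 U"
    unfolding fatou_set_def by blast
  then have "(f ^^ 0) z \<notin> poles f"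
    unfolding iterate_defined_on_def by blast
  then show ?thesis by simp
qed

lemma invariant_rotation_domain_open:
  assumes "invariant_rotation_domain f D"
  shows "open D" and "D \<subseteq> fatou_set f"
proof -
  obtain z where "D = connected_component_set (fatou_set f) z"
    using assms by (auto simp: invariant_rotation_domain_def fatou_component_def)
  then show "open D" and "D \<subseteq> fatou_set f"
    using fatou_set_open open_connected_component connected_component_subset by blast+
qed

lemma compact_level_set_of_conformal_map:
  assumes "open D" "\<phi> holomorphic_on D" "inj_on \<phi> D" "sphere 0 R \<subseteq> \<phi> ` D"
  shows "compact {z \<in> D. norm (\<phi> z) = R}"
proof -
  obtain g where g_holo: "g holomorphic_on \<phi> ` D" and g_inv: "\<And>z. z \<in> D \<Longrightarrow> g (\<phi> z) = z"
    using holomorphic_has_inverse[OF assms(2,1,3)] by metis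
  have "{z \<in> D. norm (\<phi> z) = R} = g ` sphere 0 R"
  proof
    show "{z \<in> D. norm (\<phi> z) = R} \<subseteq> g ` sphere 0 R"
    proof
      fix z assume "z \<in> {z \<in> D. norm (\<phi> z) = R}"
      then show "z \<in> g ` sphere 0 R"
        using g_inv[of z] by (intro image_eqI[of z g "\<phi> z"]) auto
    qed
    show "g ` sphere 0 R \<subseteq> {z \<in> D. norm (\<phi> z) = R}"
      using assms(4) g_inv by auto
  qed
  moreover have "continuous_on (sphere 0 R) g"
    using holomorphic_on_imp_continuous_on[OF g_holo] assms(4) by (rule continuous_on_subset)
  ultimately show ?thesis
    by (simp add: compact_continuous_image)
qed

lemma level_set_covered_by_image_of_rotation:
  fixes \<phi> :: "'a \<Rightarrow> complex"
  assumes "inj_on \<phi> D" "f ` D \<subseteq> D" "\<And>z. z \<in> D \<Longrightarrow> \<phi> (f z) = a * \<phi> z"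
    and "norm a = 1" "sphere 0 R \<subseteq> \<phi> ` D"
  shows "{z \<in> D. norm (\<phi> z) = R} \<subseteq> f ` {z \<in> D. norm (\<phi> z) = R}"
proof
  fix q assume q: "q \<in> {z \<in> D. norm (\<phi> z) = R}"
  have "a \<noteq> 0"
    using \<open>norm a = 1\<close> by auto
  have "\<phi> q / a \<in> sphere 0 R"
    using q \<open>norm a = 1\<close> by (simp add: norm_divide)
  then have "\<phi> q / a \<in> \<phi> ` D"
    using assms(5) by (rule subsetD[rotated])
  then obtain p where p: "\<phi> q / a = \<phi> p" and "p \<in> D"
    by (rule imageE)
  have "\<phi> (f p) = a * \<phi> p"
    using \<open>p \<in> D\<close> by (rule assms(3))
  also have "\<dots> = \<phi> q"
    using p[symmetric] \<open>a \<noteq> 0\<close> by simp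
  finally have "f p = q"
    using assms(2) \<open>p \<in> D\<close> q by (intro inj_onD[OF assms(1)]) auto
  moreover have "norm (\<phi> p) = R"
    using p[symmetric] q \<open>norm a = 1\<close> by (simp add: norm_divide)
  ultimately show "q \<in> f ` {z \<in> D. norm (\<phi> z) = R}"
    using \<open>p \<in> D\<close> by (intro image_eqI[of q f p]) auto
qed

lemma invariant_rotation_domain_compact_covered_by_image:
  assumes "invariant_rotation_domain f D" "w \<in> D"
  obtains C where "compact C" "w \<in> C" "C \<subseteq> D" "C \<subseteq> f ` C"
proof -
  obtain \<phi> and \<theta> :: real where holo: "\<phi> holomorphic_on D" and inj: "inj_on \<phi> D"
    and image: "(\<exists>r>1. \<phi> ` D = {v. 1 < norm v \<and> norm v < r}) \<or> \<phi> ` D = ball 0 1"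
    and conj: "\<And>z. z \<in> D \<Longrightarrow> \<phi> (f z) = exp (2 * pi * \<i> * complex_of_real \<theta>) * \<phi> z"
    using assms(1) unfolding invariant_rotation_domain_def by blast
  have "f ` D \<subseteq> D"
    using assms(1) by (simp add: invariant_rotation_domain_def)
  have "\<phi> w \<in> \<phi> ` D"
    using \<open>w \<in> D\<close> by blast
  with image have sphere: "sphere 0 (norm (\<phi> w)) \<subseteq> \<phi> ` D"
  proof (elim disjE exE conjE)
    fix r assume "\<phi> ` D = {v. 1 < norm v \<and> norm v < r}"
    with \<open>\<phi> w \<in> \<phi> ` D\<close> show ?thesis by auto
  next
    assume "\<phi> ` D = ball 0 1"
    with \<open>\<phi> w \<in> \<phi> ` D\<close> show ?thesis by auto
  qed
  have "norm (exp (2 * pi * \<i> * complex_of_real \<theta>)) = 1"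
    by (simp add: norm_exp_eq_Re)
  show ?thesis
  proof (intro that[of "{z \<in> D. norm (\<phi> z) = norm (\<phi> w)}"])
    show "compact {z \<in> D. norm (\<phi> z) = norm (\<phi> w)}"
      using invariant_rotation_domain_open(1)[OF assms(1)] holo inj sphere
      by (rule compact_level_set_of_conformal_map)
    show "{z \<in> D. norm (\<phi> z) = norm (\<phi> w)} \<subseteq> f ` {z \<in> D. norm (\<phi> z) = norm (\<phi> w)}"
      using inj \<open>f ` D \<subseteq> D\<close> conj \<open>norm (exp _) = 1\<close> sphere
      by (rule level_set_covered_by_image_of_rotation)
  qed (use \<open>w \<in> D\<close> in auto)
qed

lemma eventually_expanding_at_repelling_fixed_point:
  assumes "(f has_field_derivative f') (at z)" "f z = z" "1 < norm f'"
  shows "\<forall>\<^sub>F y in at z. dist y z < dist (f y) z"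
proof -
  have "((\<lambda>y. norm ((f y - f z) / (y - z))) \<longlongrightarrow> norm f') (at z)"
    using assms(1) by (intro tendsto_norm) (simp add: has_field_derivative_iff)
  from order_tendstoD(1)[OF this assms(3)]
  have "\<forall>\<^sub>F y in at z. 1 < norm (f y - z) / norm (y - z)"
    using assms(2) by (simp add: norm_divide)
  moreover have "\<forall>\<^sub>F y in at z. y \<noteq> z"
    by (simp add: eventually_at_filter)
  ultimately show ?thesis
    by eventually_elim (simp add: dist_norm less_divide_eq_1_pos)
qed

lemma holomorphic_image_ball_contains_ball:
  assumes "f holomorphic_on ball z r" "\<not> f constant_on ball z r" "0 < r"
  obtains \<epsilon> where "0 < \<epsilon>" "ball (f z) \<epsilon> \<subseteq> f ` ball z r"
proof -
  have "open (f ` ball z r)"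
    using assms by (intro open_mapping_thm[of f "ball z r"]) auto
  moreover have "f z \<in> f ` ball z r"
    using \<open>0 < r\<close> by simp
  ultimately show ?thesis
    using that open_contains_ball by blast
qed

lemma compact_covered_by_image_apart_from_expanding_fixed_point:
  assumes expanding: "\<And>y. y \<in> ball z0 \<delta> \<Longrightarrow> y \<noteq> z0 \<Longrightarrow> dist y z0 < dist (f y) z0"
    and onto: "ball z0 \<epsilon> \<subseteq> f ` ball z0 \<delta>"
    and inj: "inj_on f V" and "ball z0 \<delta> \<subseteq> V"
    and "compact C" "C \<subseteq> V" "C \<subseteq> f ` C" "z0 \<notin> C"
  shows "C \<inter> ball z0 \<epsilon> = {}"
proof (rule ccontr)
  assume "C \<inter> ball z0 \<epsilon> \<noteq> {}"
  then obtain c where "c \<in> C" and "dist z0 c < \<epsilon>"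
    by auto
  then have "C \<noteq> {}"
    by blast
  moreover have "continuous_on C (dist z0)"
    by (intro continuous_intros)
  ultimately obtain u where "u \<in> C" and nearest: "\<forall>y\<in>C. dist z0 u \<le> dist z0 y"
    using continuous_attains_inf[OF \<open>compact C\<close>] by meson
  have "u \<in> ball z0 \<epsilon>"
    using nearest \<open>c \<in> C\<close> \<open>dist z0 c < \<epsilon>\<close> by fastforce
  then obtain x where "x \<in> ball z0 \<delta>" and "u = f x"
    using onto by blast
  obtain p where "p \<in> C" and "u = f p"
    using \<open>u \<in> C\<close> \<open>C \<subseteq> f ` C\<close> by blast
  have "x \<in> V" and "p \<in> V"
    using \<open>x \<in> ball z0 \<delta>\<close> \<open>ball z0 \<delta> \<subseteq> V\<close> \<open>p \<in> C\<close> \<open>C \<subseteq> V\<close> by auto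
  with \<open>u = f x\<close> \<open>u = f p\<close> have "x = p"
    using inj_onD[OF inj] by metis
  have "x \<noteq> z0"
    using \<open>x = p\<close> \<open>p \<in> C\<close> \<open>z0 \<notin> C\<close> by blast
  then have "dist z0 x < dist z0 u"
    using expanding[OF \<open>x \<in> ball z0 \<delta>\<close>] \<open>u = f x\<close> by (simp add: dist_commute)
  moreover have "dist z0 u \<le> dist z0 x"
    using nearest \<open>x = p\<close> \<open>p \<in> C\<close> by blast
  ultimately show False
    by simp
qed

lemma repelling_fixed_point_apart_from_compacts_covered_by_image:
  assumes "f analytic_on {z0}" "f z0 = z0" "1 < norm (deriv f z0)"
    and "inj_on f V" "z0 \<in> interior V"
  obtains \<epsilon> where "0 < \<epsilon>"
    "\<And>C. compact C \<Longrightarrow> C \<subseteq> V \<Longrightarrow> C \<subseteq> f ` C \<Longrightarrow> z0 \<notin> C \<Longrightarrow> C \<inter> ball z0 \<epsilon> = {}"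
proof -
  obtain r0 where "0 < r0" and holo: "f holomorphic_on ball z0 r0"
    using assms(1) by (auto simp: analytic_on_def)
  have "(f has_field_derivative deriv f z0) (at z0)"
    using assms(1) by (simp add: analytic_on_imp_differentiable_at DERIV_deriv_iff_field_differentiable)
  from eventually_expanding_at_repelling_fixed_point[OF this assms(2,3)]
  obtain r1 where "0 < r1" and r1: "\<And>y. y \<noteq> z0 \<Longrightarrow> dist y z0 < r1 \<Longrightarrow> dist y z0 < dist (f y) z0"
    by (auto simp: eventually_at)
  obtain r2 where "0 < r2" and "ball z0 r2 \<subseteq> V"
    using assms(5) by (auto simp: mem_interior)
  define \<delta> where "\<delta> = min r0 (min r1 r2)"
  have "0 < \<delta>" and "ball z0 \<delta> \<subseteq> V"
    using \<open>0 < r0\<close> \<open>0 < r1\<close> \<open>0 < r2\<close> \<open>ball z0 r2 \<subseteq> V\<close> by (auto simp: \<delta>_def)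
  have expanding: "\<And>y. y \<in> ball z0 \<delta> \<Longrightarrow> y \<noteq> z0 \<Longrightarrow> dist y z0 < dist (f y) z0"
    using r1 by (simp add: \<delta>_def dist_commute)
  have "f holomorphic_on ball z0 \<delta>"
    using holo by (rule holomorphic_on_subset) (simp add: \<delta>_def subset_ball)
  moreover have "\<not> f constant_on ball z0 \<delta>"
  proof
    assume "f constant_on ball z0 \<delta>"
    then have "f (z0 + of_real (\<delta> / 2)) = f z0"
      using \<open>0 < \<delta>\<close> by (auto simp: constant_on_def dist_norm)
    moreover have "dist (z0 + of_real (\<delta> / 2)) z0 < dist (f (z0 + of_real (\<delta> / 2))) z0"
      using \<open>0 < \<delta>\<close> by (intro expanding) (auto simp: dist_norm)
    ultimately show False
      using assms(2) by simp
  qed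
  ultimately obtain \<epsilon> where "0 < \<epsilon>" and "ball z0 \<epsilon> \<subseteq> f ` ball z0 \<delta>"
    using holomorphic_image_ball_contains_ball \<open>0 < \<delta>\<close> assms(2) by metis
  then show ?thesis
    using that compact_covered_by_image_apart_from_expanding_fixed_point[OF expanding _ assms(4)
        \<open>ball z0 \<delta> \<subseteq> V\<close>]
    by blast
qed

lemma analytic_at_interior_diff_poles:
  assumes "f analytic_on {z}" "z \<in> interior U"
  shows "z \<in> interior (U - poles f)"
proof -
  obtain S where "open S" "z \<in> S" and holo: "f holomorphic_on S"
    using assms(1) analytic_at by blast
  have "U \<inter> S \<subseteq> U - poles f"
    using not_is_pole_holomorphic[OF \<open>open S\<close> _ holo] by (auto simp: poles_def)
  moreover have "z \<in> interior (U \<inter> S)"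
    using assms(2) \<open>open S\<close> \<open>z \<in> S\<close> by (simp add: interior_open)
  ultimately show ?thesis
    using interior_mono by blast
qed

lemma invariant_rotation_domain_compacts_near_boundary:
  assumes "invariant_rotation_domain f D" "z \<in> frontier D" "0 < \<epsilon>"
  obtains C where "compact C" "C \<subseteq> D" "C \<subseteq> f ` C" "z \<notin> C" "C \<inter> ball z \<epsilon> \<noteq> {}"
proof -
  obtain w where "w \<in> D" "dist z w < \<epsilon>"
    using assms(2,3) by (auto simp: frontier_def closure_approachable dist_commute)
  obtain C where "compact C" "w \<in> C" "C \<subseteq> D" "C \<subseteq> f ` C"
    using invariant_rotation_domain_compact_covered_by_image[OF assms(1) \<open>w \<in> D\<close>] by blast
  have "z \<notin> D"
    using assms(2) frontier_disjoint_eq invariant_rotation_domain_open(1)[OF assms(1)] by blast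
  show ?thesis
  proof (rule that)
    show "z \<notin> C"
      using \<open>C \<subseteq> D\<close> \<open>z \<notin> D\<close> by blast
    show "C \<inter> ball z \<epsilon> \<noteq> {}"
      using \<open>w \<in> C\<close> \<open>dist z w < \<epsilon>\<close> by auto
  qed fact+
qed

lemma class_MS_analytic_at: "class_MS f \<Longrightarrow> z \<notin> poles f \<Longrightarrow> f analytic_on {z}"
  using nicely_meromorphic_on_imp_analytic_at
  by (auto simp: class_MS_def general_transcendental_meromorphic_def poles_def)

theorem corollary1p2:
  fixes f :: "complex \<Rightarrow> complex" and D :: "complex set"
  assumes "class_MS f"
    and "invariant_rotation_domain f D"
    and "\<exists>U. open U \<and> closure D \<subseteq> U \<and> univalent_on f U"
  shows "\<not> (\<exists>z0 \<in> frontier D. repelling_fixed_point f z0)"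
proof
  assume "\<exists>z0 \<in> frontier D. repelling_fixed_point f z0"
  then obtain z0 where "z0 \<in> frontier D" "z0 \<notin> poles f" "f z0 = z0" "1 < norm (deriv f z0)"
    by (auto simp: repelling_fixed_point_def)
  obtain U where "open U" "closure D \<subseteq> U" and inj: "inj_on f (U - poles f)"
    using assms(3) by (auto simp: univalent_on_def)
  have analytic: "f analytic_on {z0}"
    using assms(1) \<open>z0 \<notin> poles f\<close> by (rule class_MS_analytic_at)
  have "z0 \<in> interior (U - poles f)"
    using \<open>z0 \<in> frontier D\<close> \<open>closure D \<subseteq> U\<close> \<open>open U\<close>
    by (intro analytic_at_interior_diff_poles[OF analytic]) (auto simp: frontier_def interior_open)
  then obtain \<epsilon> where "0 < \<epsilon>" and apart:
    "\<And>C. compact C \<Longrightarrow> C \<subseteq> U - poles f \<Longrightarrow> C \<subseteq> f ` C \<Longrightarrow> z0 \<notin> C \<Longrightarrow> C \<inter> ball z0 \<epsilon> = {}"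
    using repelling_fixed_point_apart_from_compacts_covered_by_image[OF analytic \<open>f z0 = z0\<close>
        \<open>1 < norm (deriv f z0)\<close> inj] by blast
  obtain C where "compact C" "C \<subseteq> D" "C \<subseteq> f ` C" "z0 \<notin> C" "C \<inter> ball z0 \<epsilon> \<noteq> {}"
    using invariant_rotation_domain_compacts_near_boundary[OF assms(2) \<open>z0 \<in> frontier D\<close> \<open>0 < \<epsilon>\<close>] .
  have "D \<subseteq> U - poles f"
    using \<open>closure D \<subseteq> U\<close> closure_subset fatou_set_disjoint_poles
      invariant_rotation_domain_open(2)[OF assms(2)] by blast
  then have "C \<inter> ball z0 \<epsilon> = {}"
    using \<open>C \<subseteq> D\<close> by (intro apart[OF \<open>compact C\<close> _ \<open>C \<subseteq> f ` C\<close> \<open>z0 \<notin> C\<close>]) blast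
  with \<open>C \<inter> ball z0 \<epsilon> \<noteq> {}\<close> show False
    by blast
qed

end
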